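(* Let $p\in\mathbb{R}^d$, $\epsilon>0$, and $\psi:\mathbb{R}^d\to[0,1]$ be such that every oriented hyperplane $H$ with $B(p,\epsilon)\subseteq H^+$ is a reflecting hyperplane for $\psi$. Then for all $x,y\in\mathbb{R}^d$ with $\|x-p\|-\|y-p\|>2\epsilon$, we have $\psi(x)\le\psi(y)$.
   Context: $B(p,\epsilon)$ is the open Euclidean ball. An oriented hyperplane is $H=\{x:\langle x,u\rangle=a\}$ with $u$ a unit vector, $a\in\mathbb{R}$; $H^-=\{\langle x,u\rangle<a\}$, $H^+=\{\langle x,u\rangle>a\}$, and $x^H=x-2(\langle x,u\rangle-a)u$. $H$ is a reflecting hyperplane for $\psi$ if $\psi(x)\le\psi(x^H)$ for all $x\in H^-$. *)

theory Defs
  imports "HOL-Analysis.Analysis"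
begin

text \<open>An oriented hyperplane H = {x. <x,u> = a} is represented by the pair (u, a) with norm u = 1.\<close>

definition hplus :: "'a::euclidean_space \<Rightarrow> real \<Rightarrow> 'a set" where
  "hplus u a = {x. x \<bullet> u > a}"

definition hminus :: "'a::euclidean_space \<Rightarrow> real \<Rightarrow> 'a set" where
  "hminus u a = {x. x \<bullet> u < a}"

definition hreflect :: "'a::euclidean_space \<Rightarrow> real \<Rightarrow> 'a \<Rightarrow> 'a" where
  "hreflect u a x = x - (2 * (x \<bullet> u - a)) *\<^sub>R u"

definition reflecting_hyperplane :: "('a::euclidean_space \<Rightarrow> real) \<Rightarrow> 'a \<Rightarrow> real \<Rightarrow> bool" where
  "reflecting_hyperplane \<psi> u a \<longleftrightarrow> (\<forall>x \<in> hminus u a. \<psi> x \<le> \<psi> (hreflect u a x))"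

end

theory Submission
  imports Defs
begin

text \<open>The perpendicular bisector of \<open>x \<noteq> y\<close>, oriented towards \<open>y\<close>, reflects \<open>x\<close> onto \<open>y\<close> and
  has \<open>x\<close> on its negative side. If \<open>\<parallel>x - p\<parallel> - \<parallel>y - p\<parallel> > 2\<epsilon>\<close>, the triangle inequality shows
  that every point of \<open>B(p,\<epsilon>)\<close> is strictly closer to \<open>y\<close> than to \<open>x\<close>, i.e. the ball lies on the
  positive side, so the bisector is a reflecting hyperplane and \<open>\<psi> x \<le> \<psi> y\<close>.\<close>

definition bisector_normal :: "'a::euclidean_space \<Rightarrow> 'a \<Rightarrow> 'a" where
  "bisector_normal x y = (y - x) /\<^sub>R norm (y - x)"

definition bisector_offset :: "'a::euclidean_space \<Rightarrow> 'a \<Rightarrow> real" where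
  "bisector_offset x y = (y \<bullet> y - x \<bullet> x) / (2 * norm (y - x))"

lemma norm_bisector_normal:
  assumes "x \<noteq> y"
  shows "norm (bisector_normal x y) = 1"
  using assms by (simp add: bisector_normal_def)

lemma inner_bisector_normal_minus_offset:
  assumes "x \<noteq> y"
  shows "z \<bullet> bisector_normal x y - bisector_offset x y
           = ((dist z x)\<^sup>2 - (dist z y)\<^sup>2) / (2 * dist x y)"
proof -
  have d: "norm (y - x) = dist x y"
    by (simp add: dist_norm norm_minus_commute)
  have "(dist z x)\<^sup>2 - (dist z y)\<^sup>2 = 2 * (z \<bullet> y - z \<bullet> x) - (y \<bullet> y - x \<bullet> x)"
    by (simp add: dist_norm power2_norm_eq_inner inner_diff_left inner_diff_right inner_commute)
  moreover have "z \<bullet> bisector_normal x y = (z \<bullet> y - z \<bullet> x) / dist x y"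
    by (simp add: bisector_normal_def d inner_diff_right divide_inverse_commute)
  ultimately show ?thesis
    using assms by (simp add: bisector_offset_def d diff_divide_distrib)
qed

lemma hplus_bisector:
  assumes "x \<noteq> y"
  shows "hplus (bisector_normal x y) (bisector_offset x y) = {z. dist z y < dist z x}"
proof -
  have d_pos: "2 * dist x y > 0"
    using assms by simp
  have "z \<bullet> bisector_normal x y > bisector_offset x y \<longleftrightarrow> dist z y < dist z x" for z
  proof -
    have "z \<bullet> bisector_normal x y > bisector_offset x y \<longleftrightarrow>
          ((dist z x)\<^sup>2 - (dist z y)\<^sup>2) / (2 * dist x y) > 0"
      unfolding inner_bisector_normal_minus_offset[OF assms, symmetric] by linarith
    also have "\<dots> \<longleftrightarrow> (dist z y)\<^sup>2 < (dist z x)\<^sup>2"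
      using d_pos by (simp add: zero_less_divide_iff)
    also have "\<dots> \<longleftrightarrow> dist z y < dist z x"
      by (metis not_le power_mono_iff zero_le_dist zero_less_numeral)
    finally show ?thesis .
  qed
  then show ?thesis
    by (auto simp: hplus_def)
qed

lemma mem_hminus_bisector:
  assumes "x \<noteq> y"
  shows "x \<in> hminus (bisector_normal x y) (bisector_offset x y)"
proof -
  have "x \<bullet> bisector_normal x y - bisector_offset x y < 0"
    using assms by (simp add: inner_bisector_normal_minus_offset divide_neg_pos)
  then show ?thesis
    by (simp add: hminus_def)
qed

lemma hreflect_bisector:
  assumes "x \<noteq> y"
  shows "hreflect (bisector_normal x y) (bisector_offset x y) x = y"
proof -
  have "x \<bullet> bisector_normal x y - bisector_offset x y = - dist x y / 2"
    using inner_bisector_normal_minus_offset[OF assms, of x] assms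
    by (simp add: power2_eq_square dist_commute)
  then show ?thesis
    using assms by (simp add: hreflect_def bisector_normal_def dist_norm norm_minus_commute)
qed

lemma ball_subset_closer:
  fixes p x y :: "'a::metric_space"
  assumes "dist x p - dist y p \<ge> 2 * \<epsilon>"
  shows "ball p \<epsilon> \<subseteq> {z. dist z y < dist z x}"
proof
  fix z
  assume "z \<in> ball p \<epsilon>"
  then have "dist p z < \<epsilon>"
    by simp
  moreover have "dist x p \<le> dist z x + dist p z" "dist z y \<le> dist y p + dist p z"
    by (metis dist_commute dist_triangle)+
  ultimately show "z \<in> {z. dist z y < dist z x}"
    using assms by simp
qed

theorem lemma5:
  fixes p :: "'a::euclidean_space" and \<epsilon> :: real and \<psi> :: "'a \<Rightarrow> real"
  assumes "\<epsilon> > 0"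
    and "\<And>x. 0 \<le> \<psi> x \<and> \<psi> x \<le> 1"
    and "\<And>u a. norm u = 1 \<Longrightarrow> ball p \<epsilon> \<subseteq> hplus u a \<Longrightarrow> reflecting_hyperplane \<psi> u a"
  shows "\<forall>x y. norm (x - p) - norm (y - p) > 2 * \<epsilon> \<longrightarrow> \<psi> x \<le> \<psi> y"
proof (intro allI impI)
  fix x y :: 'a
  assume far: "norm (x - p) - norm (y - p) > 2 * \<epsilon>"
  then have "x \<noteq> y"
    using assms(1) by auto
  have "ball p \<epsilon> \<subseteq> hplus (bisector_normal x y) (bisector_offset x y)"
    using ball_subset_closer[of \<epsilon> x p y] far
    by (simp add: hplus_bisector[OF \<open>x \<noteq> y\<close>] dist_norm)
  then have "reflecting_hyperplane \<psi> (bisector_normal x y) (bisector_offset x y)"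
    by (rule assms(3)[OF norm_bisector_normal[OF \<open>x \<noteq> y\<close>]])
  then show "\<psi> x \<le> \<psi> y"
    using mem_hminus_bisector[OF \<open>x \<noteq> y\<close>] hreflect_bisector[OF \<open>x \<noteq> y\<close>]
    by (metis reflecting_hyperplane_def)
qed

end
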